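(* Let $K$ be a compact line and $(F_i)_{i\in I}$ a weak*-null family in $\mathrm{NBV}(K)$. If $A\subseteq K$ has finite two-sided height in $K$, then $(F_i)_{i\in I}$ is of type $c_0\ell_1$ over $A$.
   Context: A compact line is a totally ordered set which is compact in its order topology. $\mathrm{NBV}(K)$ is the space of right-continuous real maps of bounded variation on $K$, identified with $C(K)^*$ via $F_\mu(t)=\mu([\min K,t])$. $\lim_{i\in I}a_i=0$ means $\{i:|a_i|\ge\varepsilon\}$ is finite for every $\varepsilon>0$. $(F_i)_{i\in I}$ is weak*-null if $\lim_i\int f\,d\mu_i=0$ for all $f\in C(K)$, $\mu_i$ associated to $F_i$. $(F_i)$ is of type $c_0\ell_1$ over $A$ if $F_i(t)=a_{i,t}+b_{i,t}$ ($i\in I$, $t\in A$) with $\lim_ia_{i,t}=0$ for each $t\in A$ and $\sup_i\sum_{t\in A}|b_{i,t}|<\infty$. For $A\subseteq K$, $t\in A$ is internal to $A$ relative to $K$ if $t\neq\min K,\max K$ and for all $s_1<t<s_2$ in $K$, both $]s_1,t[\cap A$ and $]t,s_2[\cap A$ are nonempty; $\mathrm{Der}(A,K)$ is the set of such points; $\mathrm{Der}_0(A,K)=A$, $\mathrm{Der}_{n+1}(A,K)=\mathrm{Der}(\mathrm{Der}_n(A,K),K)$; $A$ has finite two-sided height in $K$ if $\mathrm{Der}_n(A,K)=\emptyset$ for some natural number $n$. *)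

theory Defs
  imports "HOL-Analysis.Analysis"
begin

text \<open>A compact line is modelled as a type of class linorder_topology (order topology)
  whose universe is compact; K = UNIV.\<close>

definition lim_zero_on :: "'i set \<Rightarrow> ('i \<Rightarrow> real) \<Rightarrow> bool" where
  "lim_zero_on I a \<longleftrightarrow> (\<forall>\<epsilon>>0. finite {i \<in> I. \<epsilon> \<le> \<bar>a i\<bar>})"

definition regular_borel_measure :: "'a::topological_space measure \<Rightarrow> bool" where
  "regular_borel_measure M \<longleftrightarrow> sets M = sets borel \<and> finite_measure M \<and>
     (\<forall>B\<in>sets M. emeasure M B = (SUP C\<in>{C. compact C \<and> C \<subseteq> B}. emeasure M C))"

text \<open>A signed regular Borel measure mu is represented as mu = Mp - Mn with Mp, Mn regular
  finite positive Borel measures; F_mu(t) = mu([min K, t]).\<close>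
definition F_of :: "'a::linorder_topology measure \<Rightarrow> 'a measure \<Rightarrow> 'a \<Rightarrow> real" where
  "F_of Mp Mn t = measure Mp {..t} - measure Mn {..t}"

definition integral_signed :: "'a::topological_space measure \<Rightarrow> 'a measure \<Rightarrow> ('a \<Rightarrow> real) \<Rightarrow> real" where
  "integral_signed Mp Mn f = integral\<^sup>L Mp f - integral\<^sup>L Mn f"

definition weak_star_null :: "'i set \<Rightarrow> ('i \<Rightarrow> 'a::topological_space measure) \<Rightarrow> ('i \<Rightarrow> 'a measure) \<Rightarrow> bool" where
  "weak_star_null I Mp Mn \<longleftrightarrow>
     (\<forall>f::'a \<Rightarrow> real. continuous_on UNIV f \<longrightarrow> lim_zero_on I (\<lambda>i. integral_signed (Mp i) (Mn i) f))"

definition type_c0l1 :: "'i set \<Rightarrow> ('i \<Rightarrow> 'a \<Rightarrow> real) \<Rightarrow> 'a set \<Rightarrow> bool" where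
  "type_c0l1 I F A \<longleftrightarrow> (\<exists>a b. (\<forall>i\<in>I. \<forall>t\<in>A. F i t = a i t + b i t)
     \<and> (\<forall>t\<in>A. lim_zero_on I (\<lambda>i. a i t))
     \<and> (\<exists>C. \<forall>i\<in>I. \<forall>S. S \<subseteq> A \<and> finite S \<longrightarrow> (\<Sum>t\<in>S. \<bar>b i t\<bar>) \<le> C))"

definition Der :: "'a::linorder set \<Rightarrow> 'a set" where
  "Der A = {t \<in> A. (\<exists>s. s < t) \<and> (\<exists>s. t < s) \<and>
      (\<forall>s1 s2. s1 < t \<and> t < s2 \<longrightarrow> {s1<..<t} \<inter> A \<noteq> {} \<and> {t<..<s2} \<inter> A \<noteq> {})}"

definition finite_two_sided_height :: "'a::linorder set \<Rightarrow> bool" where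
  "finite_two_sided_height A \<longleftrightarrow> (\<exists>n::nat. (Der ^^ n) A = {})"

end

theory Submission
  imports Defs
begin

text \<open>
  Write \<open>\<mu>\<^sub>i\<close> for the signed measure of \<open>F\<^sub>i\<close>. By the uniform boundedness principle the
  weak*-null family is bounded, say by \<open>C\<close>, on the unit ball of \<open>C(K)\<close>. A point \<open>t\<close> of \<open>A\<close>
  that is not internal to \<open>A\<close> has a gap of \<open>A\<close> adjacent to it on the left or on the right
  (or is an endpoint of \<open>K\<close>), so Urysohn's lemma yields a continuous \<open>0 \<le> f\<^sub>t \<le> 1\<close> that agrees
  with the indicator of \<open>[min K, t]\<close> outside that gap. Split
  \<open>F\<^sub>i(t) = \<mu>\<^sub>i(f\<^sub>t) + \<mu>\<^sub>i(1\<^bsub>[min K, t]\<^esub> - f\<^sub>t)\<close>: the first term tends to \<open>0\<close> by weak*-nullness.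
  Gaps on the same side of distinct points of \<open>A\<close> are disjoint, so for finitely many such \<open>t\<close>
  the function \<open>\<Sum>\<^sub>t sgn(\<mu>\<^sub>i(1\<^bsub>[min K, t]\<^esub> - f\<^sub>t)) (1\<^bsub>[min K, t]\<^esub> - f\<^sub>t)\<close> has sup-norm at most \<open>1\<close>;
  by regularity it is an \<open>L\<^sup>1(|\<mu>\<^sub>i|)\<close>-limit of continuous functions of norm at most \<open>1\<close>, whence
  \<open>\<Sum>\<^sub>t |\<mu>\<^sub>i(1\<^bsub>[min K, t]\<^esub> - f\<^sub>t)| \<le> C\<close> for each side. Thus \<open>F\<close> is of type \<open>c\<^sub>0\<ell>\<^sub>1\<close> over
  \<open>A - Der A\<close>, and induction on the height along \<open>A = (A - Der A) \<union> Der A\<close> finishes the proof.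
\<close>

section \<open>Regular Borel measures on a compact space\<close>

lemma
  assumes "regular_borel_measure M"
  shows regular_borel_measure_finite: "finite_measure M"
    and sets_regular_borel_measure: "sets M = sets borel"
  using assms by (simp_all add: regular_borel_measure_def)

lemma integrable_regular_borel_measure_bounded:
  assumes "regular_borel_measure M" "h \<in> borel_measurable borel" "\<And>x. \<bar>h x\<bar> \<le> B"
  shows "integrable M (h :: _ \<Rightarrow> real)"
proof -
  interpret finite_measure M using assms(1) by (rule regular_borel_measure_finite)
  have "h \<in> borel_measurable M"
    using assms(2) measurable_cong_sets[OF sets_regular_borel_measure[OF assms(1)] refl] by blast
  then show ?thesis
    by (intro integrable_const_bound[where B=B]) (auto simp: assms(3))
qed

lemma integrable_regular_borel_measure_continuous:
  assumes "compact (UNIV :: 'a::topological_space set)" "regular_borel_measure M"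
    and "continuous_on UNIV (f :: 'a \<Rightarrow> real)"
  shows "integrable M f"
proof -
  have "bounded (range f)"
    using compact_continuous_image[OF assms(3,1)] by (rule compact_imp_bounded)
  then obtain B where "\<And>x. \<bar>f x\<bar> \<le> B" by (auto simp: bounded_iff)
  then show ?thesis
    using integrable_regular_borel_measure_bounded[OF assms(2) borel_measurable_continuous_onI[OF assms(3)]]
    by blast
qed

lemma integrable_regular_borel_measure_indicator:
  assumes "regular_borel_measure M" "A \<in> sets borel"
  shows "integrable M (indicator A :: _ \<Rightarrow> real)"
  by (rule integrable_regular_borel_measure_bounded[OF assms(1), where B=1])
    (use assms(2) in \<open>auto simp: indicator_def\<close>)

lemma regular_borel_measure_inner_compact:
  fixes M :: "'a::t2_space measure"
  assumes "regular_borel_measure M" "U \<in> sets borel" "\<delta> > 0"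
  obtains C where "compact C" "C \<subseteq> U" "measure M (U - C) < \<delta>"
proof (cases "measure M U < \<delta>")
  case True
  then show ?thesis by (intro that[of "{}"]) auto
next
  case False
  interpret finite_measure M using assms(1) by (rule regular_borel_measure_finite)
  have sets: "sets M = sets borel" using assms(1) by (rule sets_regular_borel_measure)
  have "ennreal (measure M U - \<delta>) < emeasure M U"
    using False assms(3) by (simp add: emeasure_eq_measure ennreal_less_iff)
  also have "\<dots> = (SUP C\<in>{C. compact C \<and> C \<subseteq> U}. emeasure M C)"
    using assms(1,2) by (simp add: regular_borel_measure_def)
  finally obtain C where C: "compact C" "C \<subseteq> U" "ennreal (measure M U - \<delta>) < emeasure M C"
    by (auto simp: less_SUP_iff)
  have "C \<in> sets M" using sets C(1) by (simp add: compact_imp_closed)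
  moreover have "U \<in> sets M" using sets assms(2) by simp
  ultimately show ?thesis
    using C False assms(3) by (intro that[OF C(1,2)])
      (simp_all add: emeasure_eq_measure ennreal_less_iff finite_measure_Diff)
qed

lemma Urysohn_compact_t2:
  fixes C D :: "'a::t2_space set"
  assumes "compact (UNIV :: 'a set)" "closed C" "closed D" "C \<inter> D = {}"
  obtains k :: "'a \<Rightarrow> real" where "continuous_on UNIV k" "\<And>x. 0 \<le> k x \<and> k x \<le> 1"
    "\<And>x. x \<in> C \<Longrightarrow> k x = 0" "\<And>x. x \<in> D \<Longrightarrow> k x = 1"
proof -
  have "Hausdorff_space (euclidean :: 'a topology)"
    unfolding Hausdorff_space_def by (metis disjnt_def hausdorff open_openin)
  then have "normal_space (euclidean :: 'a topology)"
    using assms(1) by (intro compact_Hausdorff_or_regular_imp_normal_space) (auto simp: compact_space_def)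
  then obtain k where k: "continuous_map euclidean (top_of_set {0..1::real}) k" "k ` C \<subseteq> {0}" "k ` D \<subseteq> {1}"
    using Urysohn_lemma[of euclidean C D 0 1] assms(2-4) by (auto simp: disjnt_def)
  then have "continuous_on UNIV k" "range k \<subseteq> {0..1}"
    using continuous_map_subtopology_eu[of UNIV "{0..1::real}" k] by (auto simp: Pi_iff)
  then show ?thesis using k(2,3) by (intro that[of k]) (auto simp: image_subset_iff)
qed

lemma closed_indicator_L1_approx:
  fixes M1 M2 :: "'a::t2_space measure"
  assumes cpt: "compact (UNIV :: 'a set)"
    and r1: "regular_borel_measure M1" and r2: "regular_borel_measure M2"
    and D: "closed D" and \<delta>: "\<delta> > 0"
  obtains k :: "'a \<Rightarrow> real" where "continuous_on UNIV k" "\<And>x. 0 \<le> k x \<and> k x \<le> 1"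
    "(\<integral>x. \<bar>indicator D x - k x\<bar> \<partial>M1) \<le> \<delta>" "(\<integral>x. \<bar>indicator D x - k x\<bar> \<partial>M2) \<le> \<delta>"
proof -
  have "- D \<in> sets borel" using D by auto
  then obtain C1 C2 where C: "compact C1" "C1 \<subseteq> - D" "measure M1 (- D - C1) < \<delta>"
      "compact C2" "C2 \<subseteq> - D" "measure M2 (- D - C2) < \<delta>"
    using regular_borel_measure_inner_compact[OF r1 _ \<delta>] regular_borel_measure_inner_compact[OF r2 _ \<delta>]
    by metis
  have "closed (C1 \<union> C2)" using C by (intro closed_Un compact_imp_closed)
  then obtain k :: "'a \<Rightarrow> real" where k: "continuous_on UNIV k" "\<And>x. 0 \<le> k x \<and> k x \<le> 1"
    "\<And>x. x \<in> C1 \<union> C2 \<Longrightarrow> k x = 0" "\<And>x. x \<in> D \<Longrightarrow> k x = 1"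
    using Urysohn_compact_t2[OF cpt _ D] C by blast
  have err: "(\<integral>x. \<bar>indicator D x - k x\<bar> \<partial>M) < \<delta>"
    if M: "regular_borel_measure M" and "C' \<subseteq> C1 \<union> C2" "compact C'" "measure M (- D - C') < \<delta>"
    for M C'
  proof -
    interpret finite_measure M using M by (rule regular_borel_measure_finite)
    have sets: "sets M = sets borel" using M by (rule sets_regular_borel_measure)
    have sets_err: "- D - (C1 \<union> C2) \<in> sets M" "- D - C' \<in> sets M"
      using sets D \<open>closed (C1 \<union> C2)\<close> compact_imp_closed[OF \<open>compact C'\<close>] by auto
    have "integrable M (\<lambda>x. \<bar>indicator D x - k x\<bar>)"
      using integrable_regular_borel_measure_indicator[OF M] integrable_regular_borel_measure_continuous[OF cpt M k(1)] D
      by (intro integrable_abs Bochner_Integration.integrable_diff) auto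
    moreover have "\<bar>indicator D x - k x\<bar> \<le> indicator (- D - (C1 \<union> C2)) x" for x
      using k(2-4)[of x] by (auto simp: indicator_def)
    ultimately have "(\<integral>x. \<bar>indicator D x - k x\<bar> \<partial>M) \<le> (\<integral>x. indicator (- D - (C1 \<union> C2)) x \<partial>M)"
      using sets_err by (intro integral_mono) (auto simp: emeasure_eq_measure)
    also have "\<dots> = measure M (- D - (C1 \<union> C2))"
      using sets_err by simp
    also have "\<dots> \<le> measure M (- D - C')"
      using sets_err \<open>C' \<subseteq> C1 \<union> C2\<close> by (intro finite_measure_mono) auto
    finally show ?thesis using that(4) by linarith
  qed
  show ?thesis
    using err[OF r1 _ C(1,3)] err[OF r2 _ C(4,6)] by (intro that[OF k(1,2)]) auto
qed

section \<open>Signed integrals of closed step functions\<close>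

lemma integral_signed_diff:
  assumes "integrable M1 f" "integrable M1 g" "integrable M2 f" "integrable M2 g"
  shows "integral_signed M1 M2 (\<lambda>x. f x - g x) = integral_signed M1 M2 f - integral_signed M1 M2 (g :: _ \<Rightarrow> real)"
  using assms by (simp add: integral_signed_def)

lemma integral_signed_sum:
  assumes "\<And>t. t \<in> S \<Longrightarrow> integrable M1 (g t)" "\<And>t. t \<in> S \<Longrightarrow> integrable M2 (g t)"
  shows "integral_signed M1 M2 (\<lambda>x. \<Sum>t\<in>S. c t * g t x) = (\<Sum>t\<in>S. c t * integral_signed M1 M2 (g t :: _ \<Rightarrow> real))"
  using assms by (simp add: integral_signed_def sum_subtractf right_diff_distrib)

lemma abs_integral_signed_le:
  "\<bar>integral_signed M1 M2 h\<bar> \<le> (\<integral>x. \<bar>h x\<bar> \<partial>M1) + (\<integral>x. \<bar>h x :: real\<bar> \<partial>M2)"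
  using integral_abs_bound[of M1 h] integral_abs_bound[of M2 h]
  unfolding integral_signed_def by linarith

lemma closed_indicators_L1_approx:
  fixes M1 M2 :: "'a::t2_space measure" and D :: "'t \<Rightarrow> 'a set"
  assumes cpt: "compact (UNIV :: 'a set)"
    and r1: "regular_borel_measure M1" and r2: "regular_borel_measure M2"
    and D: "\<And>t. t \<in> S \<Longrightarrow> closed (D t)" and \<delta>: "\<delta> > 0"
  obtains k :: "'t \<Rightarrow> 'a \<Rightarrow> real"
  where "\<And>t. t \<in> S \<Longrightarrow> continuous_on UNIV (k t)" "\<And>t x. t \<in> S \<Longrightarrow> 0 \<le> k t x \<and> k t x \<le> 1"
    "\<And>t. t \<in> S \<Longrightarrow> (\<integral>x. \<bar>indicator (D t) x - k t x\<bar> \<partial>M1) \<le> \<delta>"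
    "\<And>t. t \<in> S \<Longrightarrow> (\<integral>x. \<bar>indicator (D t) x - k t x\<bar> \<partial>M2) \<le> \<delta>"
proof -
  define approx where "approx t k \<longleftrightarrow> continuous_on UNIV k \<and> (\<forall>x. 0 \<le> k x \<and> k x \<le> 1) \<and>
      (\<integral>x. \<bar>indicator (D t) x - k x\<bar> \<partial>M1) \<le> \<delta> \<and> (\<integral>x. \<bar>indicator (D t) x - k x\<bar> \<partial>M2) \<le> \<delta>"
    for t and k :: "'a \<Rightarrow> real"
  have "\<exists>k. approx t k" if "t \<in> S" for t
    unfolding approx_def by (rule closed_indicator_L1_approx[OF cpt r1 r2 D[OF that] \<delta>]) blast
  then obtain k where "\<And>t. t \<in> S \<Longrightarrow> approx t (k t)"
    by metis
  then show ?thesis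
    by (intro that[of k]) (auto simp: approx_def)
qed

lemma abs_diff_clamp_le:
  fixes y z :: real
  assumes "\<bar>y\<bar> \<le> 1"
  shows "\<bar>y - max (-1) (min 1 z)\<bar> \<le> \<bar>y - z\<bar>"
  using assms by (auto simp: max_def min_def)

lemma borel_measurable_closed_step_function:
  assumes "\<And>t. t \<in> S \<Longrightarrow> closed (D t)" "continuous_on UNIV g"
  shows "(\<lambda>x. (\<Sum>t\<in>S. c t * indicator (D t) x) + g x :: real) \<in> borel_measurable borel"
  using assms
  by (intro borel_measurable_add borel_measurable_sum borel_measurable_times borel_measurable_const
      borel_measurable_indicator borel_measurable_continuous_onI) auto

lemma integral_abs_le_indicator_errors:
  fixes M :: "'a::t2_space measure" and u :: "'a \<Rightarrow> real"
  assumes cpt: "compact (UNIV :: 'a set)" and M: "regular_borel_measure M" and u: "integrable M u"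
    and D: "\<And>t. t \<in> S \<Longrightarrow> closed (D t)" and k: "\<And>t. t \<in> S \<Longrightarrow> continuous_on UNIV (k t)"
    and u_le: "\<And>x. \<bar>u x\<bar> \<le> (\<Sum>t\<in>S. \<bar>c t\<bar> * \<bar>indicator (D t) x - k t x\<bar>)"
    and err: "\<And>t. t \<in> S \<Longrightarrow> (\<integral>x. \<bar>indicator (D t) x - k t x\<bar> \<partial>M) \<le> \<delta>"
  shows "(\<integral>x. \<bar>u x\<bar> \<partial>M) \<le> (\<Sum>t\<in>S. \<bar>c t\<bar>) * \<delta>"
proof -
  have int_k: "integrable M (\<lambda>x. \<bar>indicator (D t) x - k t x\<bar>)" if "t \<in> S" for t
    using integrable_regular_borel_measure_indicator[OF M] D[OF that]
      integrable_regular_borel_measure_continuous[OF cpt M k[OF that]]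
    by (intro integrable_abs Bochner_Integration.integrable_diff) auto
  have "(\<integral>x. \<bar>u x\<bar> \<partial>M) \<le> (\<integral>x. (\<Sum>t\<in>S. \<bar>c t\<bar> * \<bar>indicator (D t) x - k t x\<bar>) \<partial>M)"
    using u int_k u_le by (intro integral_mono) auto
  also have "\<dots> = (\<Sum>t\<in>S. \<bar>c t\<bar> * (\<integral>x. \<bar>indicator (D t) x - k t x\<bar> \<partial>M))"
    using int_k by (simp add: Bochner_Integration.integral_sum)
  also have "\<dots> \<le> (\<Sum>t\<in>S. \<bar>c t\<bar>) * \<delta>"
    unfolding sum_distrib_right using err by (intro sum_mono mult_left_mono) auto
  finally show ?thesis .
qed

lemma closed_step_function_L1_approx:
  fixes M1 M2 :: "'a::t2_space measure" and g h :: "'a \<Rightarrow> real"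
  assumes cpt: "compact (UNIV :: 'a set)"
    and r1: "regular_borel_measure M1" and r2: "regular_borel_measure M2"
    and D: "\<And>t. t \<in> S \<Longrightarrow> closed (D t)" and g: "continuous_on UNIV g"
    and h_def: "h = (\<lambda>x. (\<Sum>t\<in>S. c t * indicator (D t) x) + g x)"
    and h1: "\<And>x. \<bar>h x\<bar> \<le> 1" and \<epsilon>: "\<epsilon> > 0"
  obtains \<Phi> where "continuous_on UNIV \<Phi>" "\<And>x. \<bar>\<Phi> x\<bar> \<le> 1"
    "(\<integral>x. \<bar>h x - \<Phi> x\<bar> \<partial>M1) \<le> \<epsilon>" "(\<integral>x. \<bar>h x - \<Phi> x\<bar> \<partial>M2) \<le> \<epsilon>"
proof -
  define \<delta> where "\<delta> = \<epsilon> / ((\<Sum>t\<in>S. \<bar>c t\<bar>) + 1)"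
  have denom: "(\<Sum>t\<in>S. \<bar>c t\<bar>) + 1 > 0"
    by (intro add_nonneg_pos sum_nonneg) auto
  then have \<delta>_pos: "\<delta> > 0"
    unfolding \<delta>_def using \<epsilon> by simp
  have "(\<Sum>t\<in>S. \<bar>c t\<bar>) * \<delta> \<le> ((\<Sum>t\<in>S. \<bar>c t\<bar>) + 1) * \<delta>"
    using \<delta>_pos by simp
  also have "\<dots> = \<epsilon>"
    using denom by (simp add: \<delta>_def)
  finally have \<delta>: "\<delta> > 0" "(\<Sum>t\<in>S. \<bar>c t\<bar>) * \<delta> \<le> \<epsilon>"
    using \<delta>_pos by simp_all
  obtain k where k: "\<And>t. t \<in> S \<Longrightarrow> continuous_on UNIV (k t)" "\<And>t x. t \<in> S \<Longrightarrow> 0 \<le> k t x \<and> k t x \<le> 1"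
    "\<And>t. t \<in> S \<Longrightarrow> (\<integral>x. \<bar>indicator (D t) x - k t x\<bar> \<partial>M1) \<le> \<delta>"
    "\<And>t. t \<in> S \<Longrightarrow> (\<integral>x. \<bar>indicator (D t) x - k t x\<bar> \<partial>M2) \<le> \<delta>"
    by (rule closed_indicators_L1_approx[where S = S and D = D, OF cpt r1 r2 D \<delta>(1)]) auto
  define \<Phi> where "\<Phi> x = max (-1) (min 1 ((\<Sum>t\<in>S. c t * k t x) + g x))" for x
  have \<Phi>: "continuous_on UNIV \<Phi>" "\<And>x. \<bar>\<Phi> x\<bar> \<le> 1"
    unfolding \<Phi>_def using k(1) g by (auto intro!: continuous_intros)
  have err: "\<bar>h x - \<Phi> x\<bar> \<le> (\<Sum>t\<in>S. \<bar>c t\<bar> * \<bar>indicator (D t) x - k t x\<bar>)" for x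
  proof -
    have "\<bar>h x - \<Phi> x\<bar> \<le> \<bar>h x - ((\<Sum>t\<in>S. c t * k t x) + g x)\<bar>"
      unfolding \<Phi>_def by (rule abs_diff_clamp_le[OF h1])
    also have "\<dots> = \<bar>(\<Sum>t\<in>S. c t * (indicator (D t) x - k t x))\<bar>"
      by (simp add: h_def right_diff_distrib sum_subtractf)
    also have "\<dots> \<le> (\<Sum>t\<in>S. \<bar>c t\<bar> * \<bar>indicator (D t) x - k t x\<bar>)"
      unfolding abs_mult[symmetric] by (rule sum_abs)
    finally show ?thesis .
  qed
  have h_measurable: "h \<in> borel_measurable borel"
    unfolding h_def by (rule borel_measurable_closed_step_function[OF D g])
  have int_diff: "integrable M (\<lambda>x. h x - \<Phi> x)" if M: "regular_borel_measure M" for M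
    using integrable_regular_borel_measure_bounded[OF M h_measurable h1]
      integrable_regular_borel_measure_continuous[OF cpt M \<Phi>(1)]
    by (rule Bochner_Integration.integrable_diff)
  have L1: "(\<integral>x. \<bar>h x - \<Phi> x\<bar> \<partial>M) \<le> \<epsilon>"
    if "regular_borel_measure M" "\<And>t. t \<in> S \<Longrightarrow> (\<integral>x. \<bar>indicator (D t) x - k t x\<bar> \<partial>M) \<le> \<delta>" for M
    using integral_abs_le_indicator_errors[OF cpt that(1) int_diff[OF that(1)], of S D k c \<delta>]
      D k(1) err that(2) \<delta>(2) by simp
  show ?thesis
    using L1[OF r1 k(3)] L1[OF r2 k(4)] by (intro that[OF \<Phi>]) auto
qed

lemma abs_integral_signed_le_closed_step_function:
  fixes M1 M2 :: "'a::t2_space measure" and g h :: "'a \<Rightarrow> real"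
  assumes cpt: "compact (UNIV :: 'a set)"
    and r1: "regular_borel_measure M1" and r2: "regular_borel_measure M2"
    and C: "\<And>f. continuous_on UNIV f \<Longrightarrow> (\<forall>x. \<bar>f x\<bar> \<le> 1) \<Longrightarrow> \<bar>integral_signed M1 M2 f\<bar> \<le> C"
    and D: "\<And>t. t \<in> S \<Longrightarrow> closed (D t)" and g: "continuous_on UNIV g"
    and h_def: "h = (\<lambda>x. (\<Sum>t\<in>S. c t * indicator (D t) x) + g x)"
    and h1: "\<And>x. \<bar>h x\<bar> \<le> 1"
  shows "\<bar>integral_signed M1 M2 h\<bar> \<le> C"
proof (rule field_le_epsilon)
  fix \<epsilon> :: real assume "\<epsilon> > 0"
  then have "\<epsilon> / 2 > 0" by simp
  then obtain \<Phi> where \<Phi>: "continuous_on UNIV \<Phi>" "\<And>x. \<bar>\<Phi> x\<bar> \<le> 1"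
    and L1: "(\<integral>x. \<bar>h x - \<Phi> x\<bar> \<partial>M1) \<le> \<epsilon> / 2" "(\<integral>x. \<bar>h x - \<Phi> x\<bar> \<partial>M2) \<le> \<epsilon> / 2"
    using closed_step_function_L1_approx[OF cpt r1 r2 D g h_def h1] by blast
  have "h \<in> borel_measurable borel"
    unfolding h_def by (rule borel_measurable_closed_step_function[OF D g])
  then have "integrable M h" if "regular_borel_measure M" for M
    by (rule integrable_regular_borel_measure_bounded[OF that]) (use h1 in auto)
  moreover have "integrable M \<Phi>" if "regular_borel_measure M" for M
    using integrable_regular_borel_measure_continuous[OF cpt that \<Phi>(1)] .
  ultimately have "integral_signed M1 M2 h = integral_signed M1 M2 \<Phi> + integral_signed M1 M2 (\<lambda>x. h x - \<Phi> x)"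
    using r1 r2 by (simp add: integral_signed_diff)
  moreover have "\<bar>integral_signed M1 M2 \<Phi>\<bar> \<le> C"
    using C \<Phi> by blast
  moreover have "\<bar>integral_signed M1 M2 (\<lambda>x. h x - \<Phi> x)\<bar> \<le> \<epsilon>"
    using abs_integral_signed_le[of M1 M2 "\<lambda>x. h x - \<Phi> x"] L1 by linarith
  ultimately show "\<bar>integral_signed M1 M2 h\<bar> \<le> C + \<epsilon>"
    by linarith
qed

lemma abs_sum_disjoint_supports_le:
  fixes e :: "'t \<Rightarrow> 'a \<Rightarrow> real"
  assumes "finite S" "disjoint_family_on (\<lambda>t. {x. e t x \<noteq> 0}) S"
    and "\<And>t. t \<in> S \<Longrightarrow> \<bar>e t x\<bar> \<le> 1" "\<And>t. t \<in> S \<Longrightarrow> \<bar>\<sigma> t\<bar> \<le> 1"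
  shows "\<bar>\<Sum>t\<in>S. \<sigma> t * e t x\<bar> \<le> 1"
proof (cases "\<exists>t\<in>S. e t x \<noteq> 0")
  case False
  then show ?thesis by simp
next
  case True
  then obtain t where t: "t \<in> S" "e t x \<noteq> 0" by blast
  have "e t' x = 0" if "t' \<in> S - {t}" for t'
    using assms(2) t that unfolding disjoint_family_on_def by auto
  then have "(\<Sum>t\<in>S. \<sigma> t * e t x) = \<sigma> t * e t x"
    using assms(1) t by (simp add: sum.remove)
  then show ?thesis
    using assms(3,4)[OF t(1)] by (simp add: abs_mult mult_le_one)
qed

lemma sum_abs_integral_signed_le:
  fixes M1 M2 :: "'a::t2_space measure" and f :: "'t \<Rightarrow> 'a \<Rightarrow> real"
  assumes cpt: "compact (UNIV :: 'a set)"
    and r1: "regular_borel_measure M1" and r2: "regular_borel_measure M2"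
    and C: "\<And>f. continuous_on UNIV f \<Longrightarrow> (\<forall>x. \<bar>f x\<bar> \<le> 1) \<Longrightarrow> \<bar>integral_signed M1 M2 f\<bar> \<le> C"
    and S: "finite S" and D: "\<And>t. t \<in> S \<Longrightarrow> closed (D t)"
    and f: "\<And>t. t \<in> S \<Longrightarrow> continuous_on UNIV (f t)" "\<And>t x. t \<in> S \<Longrightarrow> 0 \<le> f t x \<and> f t x \<le> 1"
    and disj: "disjoint_family_on (\<lambda>t. {x. indicator (D t) x \<noteq> f t x}) S"
  shows "(\<Sum>t\<in>S. \<bar>integral_signed M1 M2 (\<lambda>x. indicator (D t) x - f t x)\<bar>) \<le> C"
proof -
  define e where "e t x = indicator (D t) x - f t x" for t x
  define \<sigma> where "\<sigma> t = sgn (integral_signed M1 M2 (e t))" for t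
  define h where "h x = (\<Sum>t\<in>S. \<sigma> t * e t x)" for x
  have h1: "\<bar>h x\<bar> \<le> 1" for x
    unfolding h_def using S disj f(2)
    by (intro abs_sum_disjoint_supports_le) (auto simp: e_def \<sigma>_def sgn_real_def indicator_def)
  have "\<bar>integral_signed M1 M2 h\<bar> \<le> C"
  proof (rule abs_integral_signed_le_closed_step_function[OF cpt r1 r2 C D _ _ h1])
    show "continuous_on UNIV (\<lambda>x. - (\<Sum>t\<in>S. \<sigma> t * f t x))"
      using f(1) by (intro continuous_intros) auto
    show "h = (\<lambda>x. (\<Sum>t\<in>S. \<sigma> t * indicator (D t) x) + - (\<Sum>t\<in>S. \<sigma> t * f t x))"
      by (simp add: fun_eq_iff h_def e_def right_diff_distrib sum_subtractf)
  qed
  moreover have "integrable M (e t)" if M: "regular_borel_measure M" and t: "t \<in> S" for M t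
    unfolding e_def using integrable_regular_borel_measure_indicator[OF M] D[OF t]
      integrable_regular_borel_measure_continuous[OF cpt M f(1)[OF t]]
    by (intro Bochner_Integration.integrable_diff) auto
  then have "integral_signed M1 M2 h = (\<Sum>t\<in>S. \<sigma> t * integral_signed M1 M2 (e t))"
    unfolding h_def using r1 r2 by (intro integral_signed_sum) auto
  moreover have "\<sigma> t * integral_signed M1 M2 (e t) = \<bar>integral_signed M1 M2 (e t)\<bar>" for t
    by (auto simp: \<sigma>_def sgn_real_def)
  ultimately show ?thesis
    by (simp add: e_def[abs_def])
qed

section \<open>Uniform boundedness of weak*-null families\<close>

lemma complete_Baire_interior_nonempty:
  fixes E :: "nat \<Rightarrow> 'b::metric_space set"
  assumes "complete (UNIV :: 'b set)" and closed: "\<And>n. closed (E n)" and cover: "(\<Union>n. E n) = UNIV"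
  obtains n where "interior (E n) \<noteq> {}"
proof (rule ccontr)
  assume "\<not> thesis"
  then have empty: "interior (E n) = {}" for n
    using that by blast
  have "euclidean interior_of (\<Union>(range E)) = {}"
  proof (rule Baire_category_alt)
    show "completely_metrizable_space (euclidean :: 'b topology) \<or>
        locally_compact_space (euclidean :: 'b topology) \<and> regular_space euclidean"
      using Met_TC.completely_metrizable_space_mtopology assms(1) by auto
    show "closedin euclidean T \<and> euclidean interior_of T = {}" if "T \<in> range E" for T
      using that closed empty by auto
  qed simp
  then show False
    using cover by simp
qed

lemma uniform_boundedness_real_functionals:
  fixes \<Lambda> :: "'i \<Rightarrow> 'b::real_normed_vector \<Rightarrow> real"
  assumes "complete (UNIV :: 'b set)" and lin: "\<And>i. i \<in> I \<Longrightarrow> bounded_linear (\<Lambda> i)"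
    and pointwise: "\<And>x. \<exists>B. \<forall>i\<in>I. \<bar>\<Lambda> i x\<bar> \<le> B"
  obtains C where "\<And>i x. i \<in> I \<Longrightarrow> norm x \<le> 1 \<Longrightarrow> \<bar>\<Lambda> i x\<bar> \<le> C"
proof -
  define E where "E n = {x. \<forall>i\<in>I. \<bar>\<Lambda> i x\<bar> \<le> real n}" for n
  have closed: "closed (E n)" for n
  proof -
    have "closed {x. \<bar>\<Lambda> i x\<bar> \<le> real n}" if "i \<in> I" for i
      using linear_continuous_on[OF lin[OF that]] by (intro closed_Collect_le continuous_intros) auto
    then have "closed (\<Inter>i\<in>I. {x. \<bar>\<Lambda> i x\<bar> \<le> real n})" by (simp add: closed_INT)
    moreover have "E n = (\<Inter>i\<in>I. {x. \<bar>\<Lambda> i x\<bar> \<le> real n})" by (auto simp: E_def)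
    ultimately show ?thesis by simp
  qed
  have "\<exists>n. x \<in> E n" for x
  proof -
    obtain B where B: "\<forall>i\<in>I. \<bar>\<Lambda> i x\<bar> \<le> B" using pointwise by blast
    have "\<bar>\<Lambda> i x\<bar> \<le> real (nat \<lceil>B\<rceil>)" if "i \<in> I" for i
      using B that by (intro order_trans[OF _ real_nat_ceiling_ge]) blast
    then show ?thesis unfolding E_def by blast
  qed
  then have cover: "(\<Union>n. E n) = UNIV" by blast
  obtain n where "interior (E n) \<noteq> {}"
    by (rule complete_Baire_interior_nonempty[OF assms(1) closed cover])
  then obtain x0 \<rho> where \<rho>: "\<rho> > 0" "ball x0 \<rho> \<subseteq> E n"
    by (auto simp: mem_interior)
  show ?thesis
  proof (rule that)
    fix i and x :: 'b assume i: "i \<in> I" and x: "norm x \<le> 1"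
    interpret bounded_linear "\<Lambda> i" using lin[OF i] .
    have "x0 + (\<rho> / 2) *\<^sub>R x \<in> E n" "x0 \<in> E n"
      using \<rho> x by (auto intro!: subsetD[OF \<rho>(2)] simp: dist_norm)
    then have "\<bar>\<Lambda> i x0 + \<rho> / 2 * \<Lambda> i x\<bar> \<le> n" "\<bar>\<Lambda> i x0\<bar> \<le> n"
      using i by (auto simp: E_def add scale)
    then have "\<bar>\<rho> / 2 * \<Lambda> i x\<bar> \<le> 2 * n"
      by linarith
    then have "\<rho> / 2 * \<bar>\<Lambda> i x\<bar> \<le> 2 * n"
      using \<rho>(1) by (simp add: abs_mult)
    then show "\<bar>\<Lambda> i x\<bar> \<le> 4 * n / \<rho>"
      using \<rho>(1) by (simp add: field_simps)
  qed
qed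

lemma complete_UNIV_bcontfun: "complete (UNIV :: ('a::topological_space \<Rightarrow>\<^sub>C real) set)"
  unfolding complete_def
proof (intro allI impI)
  fix f :: "nat \<Rightarrow> 'a \<Rightarrow>\<^sub>C real"
  assume "(\<forall>n. f n \<in> UNIV) \<and> Cauchy f"
  then have "Cauchy f" by simp
  then obtain g where "uniform_limit UNIV f g sequentially"
    using uniformly_convergent_eq_cauchy[of "\<lambda>_. True" f]
    unfolding Cauchy_def uniform_limit_sequentially_iff
    by (metis dist_fun_lt_imp_dist_val_lt)
  then obtain l where "f \<longlonglongrightarrow> l"
    by (rule uniform_limit_bcontfunE[OF _ sequentially_bot])
  then show "\<exists>l\<in>UNIV. f \<longlonglongrightarrow> l" by blast
qed

lemma bounded_linear_integral_signed_bcontfun: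
  fixes M1 M2 :: "'a::topological_space measure"
  assumes cpt: "compact (UNIV :: 'a set)"
    and r1: "regular_borel_measure M1" and r2: "regular_borel_measure M2"
  shows "bounded_linear (\<lambda>F :: 'a \<Rightarrow>\<^sub>C real. integral_signed M1 M2 (apply_bcontfun F))"
proof (rule bounded_linear_intro[where K = "measure M1 UNIV + measure M2 UNIV"])
  have int: "integrable M (apply_bcontfun F)" if "regular_borel_measure M" for M and F :: "'a \<Rightarrow>\<^sub>C real"
    using integrable_regular_borel_measure_continuous[OF cpt that] by simp
  have L1: "(\<integral>x. \<bar>apply_bcontfun F x\<bar> \<partial>M) \<le> norm F * measure M UNIV"
    if M: "regular_borel_measure M" for M and F :: "'a \<Rightarrow>\<^sub>C real"
  proof -
    interpret finite_measure M using M by (rule regular_borel_measure_finite)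
    have "space M = UNIV"
      using sets_eq_imp_space_eq[OF sets_regular_borel_measure[OF M]] by simp
    moreover have "(\<integral>x. \<bar>apply_bcontfun F x\<bar> \<partial>M) \<le> (\<integral>x. norm F \<partial>M)"
      using int[OF M] norm_bounded[of F] by (intro integral_mono) auto
    ultimately show ?thesis by (simp add: mult.commute)
  qed
  show "integral_signed M1 M2 (F + G) = integral_signed M1 M2 F + integral_signed M1 M2 G"
    for F G :: "'a \<Rightarrow>\<^sub>C real"
    using int r1 r2 by (simp add: integral_signed_def)
  show "integral_signed M1 M2 (r *\<^sub>R F) = r *\<^sub>R integral_signed M1 M2 F" for r and F :: "'a \<Rightarrow>\<^sub>C real"
    by (simp add: integral_signed_def right_diff_distrib)
  show "norm (integral_signed M1 M2 F) \<le> norm F * (measure M1 UNIV + measure M2 UNIV)"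
    for F :: "'a \<Rightarrow>\<^sub>C real"
    using abs_integral_signed_le[of M1 M2 F] L1[OF r1, of F] L1[OF r2, of F]
    by (simp add: distrib_left)
qed

lemma lim_zero_on_bounded:
  assumes "lim_zero_on I a"
  shows "\<exists>B. \<forall>i\<in>I. \<bar>a i\<bar> \<le> B"
proof -
  define J where "J = {i \<in> I. 1 \<le> \<bar>a i\<bar>}"
  have "finite J"
    using assms unfolding lim_zero_on_def J_def by simp
  have "\<bar>a i\<bar> \<le> 1 + (\<Sum>j\<in>J. \<bar>a j\<bar>)" if "i \<in> I" for i
  proof (cases "i \<in> J")
    case True
    then show ?thesis
      using member_le_sum[of i J "\<lambda>j. \<bar>a j\<bar>"] \<open>finite J\<close> by simp
  next
    case False
    then have "\<bar>a i\<bar> < 1"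
      using that by (simp add: J_def)
    moreover have "0 \<le> (\<Sum>j\<in>J. \<bar>a j\<bar>)"
      by (simp add: sum_nonneg)
    ultimately show ?thesis by linarith
  qed
  then show ?thesis by blast
qed

lemma weak_star_null_uniformly_bounded:
  fixes Mp Mn :: "'i \<Rightarrow> 'a::topological_space measure"
  assumes cpt: "compact (UNIV :: 'a set)"
    and r: "\<forall>i\<in>I. regular_borel_measure (Mp i) \<and> regular_borel_measure (Mn i)"
    and w: "weak_star_null I Mp Mn"
  obtains C where "\<And>i f. i \<in> I \<Longrightarrow> continuous_on UNIV f \<Longrightarrow> (\<forall>x. \<bar>f x\<bar> \<le> 1) \<Longrightarrow>
    \<bar>integral_signed (Mp i) (Mn i) f\<bar> \<le> C"
proof -
  define \<Lambda> where "\<Lambda> i F = integral_signed (Mp i) (Mn i) (apply_bcontfun F)" for i and F :: "'a \<Rightarrow>\<^sub>C real"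
  have "bounded_linear (\<Lambda> i)" if "i \<in> I" for i
    unfolding \<Lambda>_def using r that by (intro bounded_linear_integral_signed_bcontfun[OF cpt]) auto
  moreover have "\<exists>B. \<forall>i\<in>I. \<bar>\<Lambda> i F\<bar> \<le> B" for F
  proof -
    have "lim_zero_on I (\<lambda>i. \<Lambda> i F)"
      using w unfolding weak_star_null_def \<Lambda>_def by simp
    then show ?thesis by (rule lim_zero_on_bounded)
  qed
  ultimately obtain C where C: "\<And>i F. i \<in> I \<Longrightarrow> norm F \<le> 1 \<Longrightarrow> \<bar>\<Lambda> i F\<bar> \<le> C"
    by (rule uniform_boundedness_real_functionals[OF complete_UNIV_bcontfun]) auto
  show ?thesis
  proof (rule that)
    fix i and f :: "'a \<Rightarrow> real"
    assume "i \<in> I" "continuous_on UNIV f" "\<forall>x. \<bar>f x\<bar> \<le> 1"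
    moreover from this have "apply_bcontfun (Bcontfun f) = f"
      by (intro Bcontfun_inverse bcontfun_normI) auto
    ultimately show "\<bar>integral_signed (Mp i) (Mn i) f\<bar> \<le> C"
      using C[of i "Bcontfun f"] by (simp add: \<Lambda>_def norm_bound)
  qed
qed

section \<open>Gaps of a subset of a line\<close>

text \<open>\<open>left_gap B t\<close> contains \<open>t\<close> itself: this accommodates \<open>t = min K\<close>, where the indicator
  of \<open>{t}\<close> need not be continuous.\<close>

definition left_gap :: "'a::linorder set \<Rightarrow> 'a \<Rightarrow> 'a set" where
  "left_gap B t = {x. x \<le> t \<and> {x..<t} \<inter> B = {}}"

definition right_gap :: "'a::linorder set \<Rightarrow> 'a \<Rightarrow> 'a set" where
  "right_gap B t = {x. t < x \<and> {t<..x} \<inter> B = {}}"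

lemma disjoint_family_on_left_gap: "disjoint_family_on (left_gap B) B"
  unfolding disjoint_family_on_def
proof (intro ballI impI)
  have lt: "left_gap B t \<inter> left_gap B t' = {}" if "t \<in> B" "t < t'" for t t'
    using that by (fastforce simp: left_gap_def disjoint_iff)
  then show "left_gap B t \<inter> left_gap B t' = {}" if "t \<in> B" "t' \<in> B" "t \<noteq> t'" for t t'
    using that lt[of t t'] lt[of t' t] by (cases "t < t'") (auto simp: Int_commute)
qed

lemma disjoint_family_on_right_gap: "disjoint_family_on (right_gap B) B"
  unfolding disjoint_family_on_def
proof (intro ballI impI)
  have lt: "right_gap B t \<inter> right_gap B t' = {}" if "t' \<in> B" "t < t'" for t t'
    using that by (fastforce simp: right_gap_def disjoint_iff)
  then show "right_gap B t \<inter> right_gap B t' = {}" if "t \<in> B" "t' \<in> B" "t \<noteq> t'" for t t'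
    using that lt[of t t'] lt[of t' t] by (cases "t < t'") (auto simp: Int_commute)
qed

lemma indicator_atMost_approx_left:
  fixes B :: "'a::linorder_topology set"
  assumes "compact (UNIV :: 'a set)" "(\<nexists>s. s < t) \<or> (\<exists>s. s < t \<and> {s<..<t} \<inter> B = {})"
  obtains f :: "'a \<Rightarrow> real" where "continuous_on UNIV f" "\<And>x. 0 \<le> f x \<and> f x \<le> 1"
    "\<And>x. x \<notin> left_gap B t \<Longrightarrow> f x = indicator {..t} x"
  using assms(2)
proof (elim disjE exE conjE)
  assume "\<nexists>s. s < t"
  then have "x \<notin> left_gap B t \<Longrightarrow> 0 = indicator {..t} x" for x :: 'a
    by (auto simp: left_gap_def indicator_def not_less)
  then show thesis by (intro that[of "\<lambda>_. 0"]) auto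
next
  fix s assume s: "s < t" and gap: "{s<..<t} \<inter> B = {}"
  obtain k :: "'a \<Rightarrow> real" where k: "continuous_on UNIV k" "\<And>x. 0 \<le> k x \<and> k x \<le> 1"
    "\<And>x. x \<in> {t..} \<Longrightarrow> k x = 0" "\<And>x. x \<in> {..s} \<Longrightarrow> k x = 1"
    by (rule Urysohn_compact_t2[OF assms(1) closed_atLeast closed_atMost]) (use s in auto)
  have "k x = indicator {..t} x" if "x \<notin> left_gap B t" for x
  proof (cases "x \<le> s")
    case False
    with that gap have "t \<le> x" by (force simp: left_gap_def)
    then show ?thesis using k(3) that by (auto simp: left_gap_def indicator_def)
  qed (use k(4) s in \<open>auto simp: indicator_def\<close>)
  with k(1,2) show thesis by (rule that)
qed

lemma indicator_atMost_approx_right: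
  fixes B :: "'a::linorder_topology set"
  assumes "compact (UNIV :: 'a set)" "(\<nexists>s. t < s) \<or> (\<exists>s. t < s \<and> {t<..<s} \<inter> B = {})"
  obtains f :: "'a \<Rightarrow> real" where "continuous_on UNIV f" "\<And>x. 0 \<le> f x \<and> f x \<le> 1"
    "\<And>x. x \<notin> right_gap B t \<Longrightarrow> f x = indicator {..t} x"
  using assms(2)
proof (elim disjE exE conjE)
  assume "\<nexists>s. t < s"
  then have "1 = indicator {..t} x" for x :: 'a
    by (auto simp: indicator_def not_less)
  then show thesis by (intro that[of "\<lambda>_. 1"]) auto
next
  fix s assume s: "t < s" and gap: "{t<..<s} \<inter> B = {}"
  obtain k :: "'a \<Rightarrow> real" where k: "continuous_on UNIV k" "\<And>x. 0 \<le> k x \<and> k x \<le> 1"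
    "\<And>x. x \<in> {s..} \<Longrightarrow> k x = 0" "\<And>x. x \<in> {..t} \<Longrightarrow> k x = 1"
    by (rule Urysohn_compact_t2[OF assms(1) closed_atLeast closed_atMost]) (use s in auto)
  have "k x = indicator {..t} x" if "x \<notin> right_gap B t" for x
  proof (cases "x \<le> t")
    case False
    with that gap have "s \<le> x" by (force simp: right_gap_def)
    then show ?thesis using k(3) False by (auto simp: indicator_def)
  qed (use k(4) in \<open>auto simp: indicator_def\<close>)
  with k(1,2) show thesis by (rule that)
qed

lemma gap_of_not_Der:
  fixes B :: "'a::linorder set"
  assumes "t \<in> B" "t \<notin> Der B"
  shows "((\<nexists>s. s < t) \<or> (\<exists>s. s < t \<and> {s<..<t} \<inter> B = {})) \<or>
         ((\<nexists>s. t < s) \<or> (\<exists>s. t < s \<and> {t<..<s} \<inter> B = {}))"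
  using assms by (auto simp: Der_def)

lemma indicator_atMost_approx:
  fixes B :: "'a::linorder_topology set"
  assumes "compact (UNIV :: 'a set)" "t \<in> B" "t \<notin> Der B"
  shows "\<exists>f :: 'a \<Rightarrow> real. \<exists>G \<in> {left_gap B t, right_gap B t}. continuous_on UNIV f \<and>
    (\<forall>x. 0 \<le> f x \<and> f x \<le> 1) \<and> (\<forall>x. x \<notin> G \<longrightarrow> f x = indicator {..t} x)"
  using gap_of_not_Der[OF assms(2,3)]
proof
  assume "(\<nexists>s. s < t) \<or> (\<exists>s. s < t \<and> {s<..<t} \<inter> B = {})"
  then obtain f :: "'a \<Rightarrow> real" where "continuous_on UNIV f" "\<And>x. 0 \<le> f x \<and> f x \<le> 1"
    "\<And>x. x \<notin> left_gap B t \<Longrightarrow> f x = indicator {..t} x"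
    by (rule indicator_atMost_approx_left[OF assms(1)]) auto
  then show ?thesis by blast
next
  assume "(\<nexists>s. t < s) \<or> (\<exists>s. t < s \<and> {t<..<s} \<inter> B = {})"
  then obtain f :: "'a \<Rightarrow> real" where "continuous_on UNIV f" "\<And>x. 0 \<le> f x \<and> f x \<le> 1"
    "\<And>x. x \<notin> right_gap B t \<Longrightarrow> f x = indicator {..t} x"
    by (rule indicator_atMost_approx_right[OF assms(1)]) auto
  then show ?thesis by blast
qed

section \<open>Families of type \<open>c\<^sub>0\<ell>\<^sub>1\<close>\<close>

lemma F_of_eq_integral_signed:
  assumes "regular_borel_measure M1" "regular_borel_measure M2"
  shows "F_of M1 M2 t = integral_signed M1 M2 (indicator {..t})"
proof -
  have "measure M {..t} = integral\<^sup>L M (indicator {..t})" if M: "regular_borel_measure M" for M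
  proof -
    interpret finite_measure M using M by (rule regular_borel_measure_finite)
    show ?thesis using sets_regular_borel_measure[OF M] by (simp add: emeasure_eq_measure)
  qed
  then show ?thesis using assms by (simp add: F_of_def integral_signed_def)
qed

lemma sum_abs_F_of_diff_le:
  fixes M1 M2 :: "'a::linorder_topology measure" and f :: "'a \<Rightarrow> 'a \<Rightarrow> real"
  assumes cpt: "compact (UNIV :: 'a set)"
    and r1: "regular_borel_measure M1" and r2: "regular_borel_measure M2"
    and C: "\<And>f. continuous_on UNIV f \<Longrightarrow> (\<forall>x. \<bar>f x\<bar> \<le> 1) \<Longrightarrow> \<bar>integral_signed M1 M2 f\<bar> \<le> C"
    and S: "finite S"
    and f: "\<And>t. t \<in> S \<Longrightarrow> continuous_on UNIV (f t)" "\<And>t x. t \<in> S \<Longrightarrow> 0 \<le> f t x \<and> f t x \<le> 1"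
    and agree: "\<And>t x. t \<in> S \<Longrightarrow> x \<notin> G t \<Longrightarrow> f t x = indicator {..t} x"
    and disj: "disjoint_family_on G S"
  shows "(\<Sum>t\<in>S. \<bar>F_of M1 M2 t - integral_signed M1 M2 (f t)\<bar>) \<le> C"
proof -
  have "F_of M1 M2 t - integral_signed M1 M2 (f t) = integral_signed M1 M2 (\<lambda>x. indicator {..t} x - f t x)"
    if "t \<in> S" for t
  proof -
    have "integrable M (indicator {..t} :: 'a \<Rightarrow> real)" "integrable M (f t)"
      if M: "regular_borel_measure M" for M
      using integrable_regular_borel_measure_indicator[OF M]
        integrable_regular_borel_measure_continuous[OF cpt M f(1)[OF \<open>t \<in> S\<close>]]
      by auto
    then show ?thesis
      using r1 r2 by (simp add: F_of_eq_integral_signed integral_signed_diff)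
  qed
  moreover have "{x. indicator {..t} x \<noteq> f t x} \<subseteq> G t" if "t \<in> S" for t
    using agree[OF that] by force
  then have "disjoint_family_on (\<lambda>t. {x. indicator {..t} x \<noteq> f t x}) S"
    by (intro disjoint_family_on_bisimulation[OF disj]) blast
  then have "(\<Sum>t\<in>S. \<bar>integral_signed M1 M2 (\<lambda>x. indicator {..t} x - f t x)\<bar>) \<le> C"
    by (intro sum_abs_integral_signed_le[OF cpt r1 r2 C S _ f]) auto
  ultimately show ?thesis
    by (simp cong: sum.cong)
qed

lemma sum_abs_F_of_diff_le_gaps:
  fixes M1 M2 :: "'a::linorder_topology measure" and f :: "'a \<Rightarrow> 'a \<Rightarrow> real"
  assumes cpt: "compact (UNIV :: 'a set)"
    and r1: "regular_borel_measure M1" and r2: "regular_borel_measure M2"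
    and C: "\<And>f. continuous_on UNIV f \<Longrightarrow> (\<forall>x. \<bar>f x\<bar> \<le> 1) \<Longrightarrow> \<bar>integral_signed M1 M2 f\<bar> \<le> C"
    and S: "finite S" "S \<subseteq> B"
    and f: "\<And>t. t \<in> S \<Longrightarrow> continuous_on UNIV (f t)" "\<And>t x. t \<in> S \<Longrightarrow> 0 \<le> f t x \<and> f t x \<le> 1"
    and G: "\<And>t. t \<in> S \<Longrightarrow> G t \<in> {left_gap B t, right_gap B t}"
    and agree: "\<And>t x. t \<in> S \<Longrightarrow> x \<notin> G t \<Longrightarrow> f t x = indicator {..t} x"
  shows "(\<Sum>t\<in>S. \<bar>F_of M1 M2 t - integral_signed M1 M2 (f t)\<bar>) \<le> 2 * C"
proof -
  define L where "L = {t \<in> S. G t = left_gap B t}"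
  have bound: "(\<Sum>t\<in>T. \<bar>F_of M1 M2 t - integral_signed M1 M2 (f t)\<bar>) \<le> C"
    if T: "T \<subseteq> S" "\<And>t. t \<in> T \<Longrightarrow> G t = gap t" and gap: "gap \<in> {left_gap B, right_gap B}" for T gap
  proof (rule sum_abs_F_of_diff_le[OF cpt r1 r2 C])
    have "T \<subseteq> B"
      using T(1) S(2) by blast
    then show "disjoint_family_on gap T"
      using gap disjoint_family_on_mono[OF _ disjoint_family_on_left_gap]
        disjoint_family_on_mono[OF _ disjoint_family_on_right_gap]
      by auto
  qed (use T S f agree in \<open>auto dest: finite_subset\<close>)
  have "(\<Sum>t\<in>S. \<bar>F_of M1 M2 t - integral_signed M1 M2 (f t)\<bar>) =
      (\<Sum>t\<in>L. \<bar>F_of M1 M2 t - integral_signed M1 M2 (f t)\<bar>) +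
      (\<Sum>t\<in>S - L. \<bar>F_of M1 M2 t - integral_signed M1 M2 (f t)\<bar>)"
    using sum.subset_diff[of L S] S(1) by (simp add: L_def add.commute)
  also have "\<dots> \<le> C + C"
  proof (rule add_mono)
    show "(\<Sum>t\<in>L. \<bar>F_of M1 M2 t - integral_signed M1 M2 (f t)\<bar>) \<le> C"
      by (rule bound[where gap = "left_gap B"]) (auto simp: L_def)
    show "(\<Sum>t\<in>S - L. \<bar>F_of M1 M2 t - integral_signed M1 M2 (f t)\<bar>) \<le> C"
      by (rule bound[where gap = "right_gap B"]) (use G in \<open>auto simp: L_def\<close>)
  qed
  finally show ?thesis by simp
qed

lemma type_c0l1_empty: "type_c0l1 I F {}"
  unfolding type_c0l1_def by (intro exI[of _ "\<lambda>i t. 0"] exI[of _ "\<lambda>i t. 0"]) auto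

lemma type_c0l1_Un:
  assumes "type_c0l1 I F A" "type_c0l1 I F B"
  shows "type_c0l1 I F (A \<union> B)"
proof -
  obtain a1 b1 C1 where 1: "\<forall>i\<in>I. \<forall>t\<in>A. F i t = a1 i t + b1 i t" "\<forall>t\<in>A. lim_zero_on I (\<lambda>i. a1 i t)"
    "\<forall>i\<in>I. \<forall>S. S \<subseteq> A \<and> finite S \<longrightarrow> (\<Sum>t\<in>S. \<bar>b1 i t\<bar>) \<le> C1"
    using assms(1) unfolding type_c0l1_def by blast
  obtain a2 b2 C2 where 2: "\<forall>i\<in>I. \<forall>t\<in>B. F i t = a2 i t + b2 i t" "\<forall>t\<in>B. lim_zero_on I (\<lambda>i. a2 i t)"
    "\<forall>i\<in>I. \<forall>S. S \<subseteq> B \<and> finite S \<longrightarrow> (\<Sum>t\<in>S. \<bar>b2 i t\<bar>) \<le> C2"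
    using assms(2) unfolding type_c0l1_def by blast
  define a where "a i t = (if t \<in> A then a1 i t else a2 i t)" for i t
  define b where "b i t = (if t \<in> A then b1 i t else b2 i t)" for i t
  have "(\<Sum>t\<in>S. \<bar>b i t\<bar>) \<le> C1 + C2" if i: "i \<in> I" and S: "S \<subseteq> A \<union> B" "finite S" for i S
  proof -
    have "(\<Sum>t\<in>S. \<bar>b i t\<bar>) = (\<Sum>t\<in>S \<inter> A. \<bar>b1 i t\<bar>) + (\<Sum>t\<in>S - A. \<bar>b2 i t\<bar>)"
      using S(2) by (simp add: b_def if_distrib[of abs] sum.If_cases Diff_eq)
    also have "\<dots> \<le> C1 + C2"
      using 1(3)[rule_format, OF i, of "S \<inter> A"] 2(3)[rule_format, OF i, of "S - A"] S
      by (intro add_mono) auto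
    finally show ?thesis .
  qed
  moreover have "\<forall>i\<in>I. \<forall>t\<in>A \<union> B. F i t = a i t + b i t"
    using 1(1) 2(1) by (auto simp: a_def b_def)
  moreover have "lim_zero_on I (\<lambda>i. a i t)" if "t \<in> A \<union> B" for t
    using 1(2) 2(2) that by (cases "t \<in> A") (auto simp: a_def)
  ultimately show ?thesis
    unfolding type_c0l1_def by blast
qed

lemma type_c0l1_finite_height:
  assumes isolated: "\<And>B. type_c0l1 I F (B - Der B)" and "finite_two_sided_height A"
  shows "type_c0l1 I F A"
proof -
  obtain n where "(Der ^^ n) A = {}"
    using assms(2) unfolding finite_two_sided_height_def by blast
  moreover have "(Der ^^ n) B = {} \<Longrightarrow> type_c0l1 I F B" for B
  proof (induction n arbitrary: B)
    case 0
    then show ?case by (simp add: type_c0l1_empty)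
  next
    case (Suc n)
    then have "type_c0l1 I F (Der B)"
      by (simp add: funpow_Suc_right del: funpow.simps)
    moreover have "B = (B - Der B) \<union> Der B"
      by (auto simp: Der_def)
    ultimately show ?case
      using type_c0l1_Un[OF isolated] by metis
  qed
  ultimately show ?thesis by blast
qed

lemma weak_star_null_type_c0l1_isolated:
  fixes Mp Mn :: "'i \<Rightarrow> 'a::linorder_topology measure"
  assumes cpt: "compact (UNIV :: 'a set)"
    and r: "\<forall>i\<in>I. regular_borel_measure (Mp i) \<and> regular_borel_measure (Mn i)"
    and w: "weak_star_null I Mp Mn"
  shows "type_c0l1 I (\<lambda>i. F_of (Mp i) (Mn i)) (B - Der B)"
proof -
  obtain C where C: "\<And>i f. i \<in> I \<Longrightarrow> continuous_on UNIV f \<Longrightarrow> (\<forall>x. \<bar>f x\<bar> \<le> 1) \<Longrightarrow>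
      \<bar>integral_signed (Mp i) (Mn i) f\<bar> \<le> C"
    by (rule weak_star_null_uniformly_bounded[OF cpt r w]) auto
  define approx where "approx t f G \<longleftrightarrow> continuous_on UNIV f \<and> (\<forall>x. 0 \<le> f x \<and> f x \<le> 1) \<and>
      G \<in> {left_gap B t, right_gap B t} \<and> (\<forall>x. x \<notin> G \<longrightarrow> f x = indicator {..t} x)"
    for t and f :: "'a \<Rightarrow> real" and G
  have "\<exists>f G. approx t f G" if "t \<in> B - Der B" for t
    using indicator_atMost_approx[OF cpt] that unfolding approx_def by blast
  then obtain f G where fG: "\<And>t. t \<in> B - Der B \<Longrightarrow> approx t (f t) (G t)"
    by metis
  define a where "a i t = integral_signed (Mp i) (Mn i) (f t)" for i t
  have lim: "lim_zero_on I (\<lambda>i. a i t)" if "t \<in> B - Der B" for t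
    using w fG[OF that] unfolding weak_star_null_def approx_def a_def by blast
  have bound: "(\<Sum>t\<in>S. \<bar>F_of (Mp i) (Mn i) t - a i t\<bar>) \<le> 2 * C"
    if i: "i \<in> I" and S: "finite S" "S \<subseteq> B - Der B" for i S
    unfolding a_def
    by (rule sum_abs_F_of_diff_le_gaps[where B = B and G = G]) (use cpt S fG r i C in \<open>auto simp: approx_def\<close>)
  show ?thesis
    unfolding type_c0l1_def
    by (rule exI[where x = a], rule exI[where x = "\<lambda>i t. F_of (Mp i) (Mn i) t - a i t"])
      (use lim bound in \<open>auto intro!: exI[where x = "2 * C"]\<close>)
qed

theorem proposition2p9:
  fixes I :: "'i set"
    and Mp Mn :: "'i \<Rightarrow> 'a::linorder_topology measure"
    and A :: "'a set"
  assumes "compact (UNIV :: 'a set)"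
    and "\<forall>i\<in>I. regular_borel_measure (Mp i) \<and> regular_borel_measure (Mn i)"
    and "weak_star_null I Mp Mn"
    and "finite_two_sided_height A"
  shows "type_c0l1 I (\<lambda>i. F_of (Mp i) (Mn i)) A"
  using type_c0l1_finite_height[OF weak_star_null_type_c0l1_isolated[OF assms(1-3)] assms(4)] .

end
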